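(* Consider the recursive network formation model with the utility function described in the context, with $\gamma=0$ and no upper bound on the number of nodes. If $$b_1-b_3\le c<b_1 \quad\text{and}\quad b_2-b_3<c_0<b_2-b_4,$$ then the resulting topology is a 2-star. That is, starting from a single node, for every $n$ the pairwise stable network reached after the $n$-th node has entered is: - for $n\le3$: a path on $n$ nodes; - for $n\ge4$: a 2-star on $n$ nodes, irrespective of the random order in which nodes are selected to move.
   Context: A 2-star on $n\ge4$ nodes consists of two adjacent "center" nodes. Every other node is a leaf adjacent to exactly one center and to nothing else. Each center has at least one leaf, and the numbers of leaves of the two centers differ by at most one. Networks are finite simple undirected graphs whose vertices (nodes) are self-interested agents. Parameters: benefits $b_1>b_2>b_3>b_4>\dots>0$, where $b_i$ is the benefit a node obtains from a node at distance $i$; a link cost $c$ per immediate neighbor; an intermediation fraction $\gamma$ with $0\le\gamma<1$; and a network entry factor $c_0$. Notation: $N$ is the set of nodes currently in the network, $d_j$ the degree of $j$, and $l(j,w)$ the graph distance. A node $x$ is essential for a pair $y,z$ (with $x\notin\{y,z\}$) if $x$ lies on every path joining $y$ and $z$. Write $E(y,z)$ for the set of nodes essential for $y,z$ and $e(y,z)=|E(y,z)|$. Only pairs joined by a path contribute to the sums below. Utility of node $j$ in network $g$: $$u_j(g)=-c_0\,d_{T(j)}\mathbf 1_{\{j=\mathrm{NE}\}}+d_j(b_1-c)+\sum_{w\in N,\ l(j,w)>1}b_{l(j,w)}-\sum_{w\in N,\ E(j,w)\ne\emptyset}\gamma\, b_{l(j,w)}+\sum_{y,z\in N,\ j\in E(y,z)}\frac{\gamma}{e(y,z)}\,2\,b_{l(y,z)}.$$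 Here $\mathbf 1_{\{j=\mathrm{NE}\}}=1$ exactly when $j$ is a newly entering node evaluating the creation of its first link. $T(j)$ is the existing node to which $j$ forms that first link, and $d_{T(j)}$ is that node's degree before the link. The network before entry gives the entering node utility $0$. Pairwise stability: $g$ is pairwise stable if (a) for every link $(i,j)\in g$, $u_i(g\setminus\{(i,j)\})\le u_i(g)$ and $u_j(g\setminus\{(i,j)\})\le u_j(g)$; and (b) for every non-link $(i,j)\notin g$, if $u_i(g\cup\{(i,j)\})>u_i(g)$ then $u_j(g\cup\{(i,j)\})<u_j(g)$. Recursive model of network formation: - The process starts with a single node. - When the current network of $n-1$ nodes is pairwise stable, a new node considers entering. Its options are to stay out or to propose a link to one existing node. The link forms iff the receiving node's utility does not decrease. No existing node can link to the newcomer before it has formed this first link. - After entry, nodes are repeatedly chosen at random to move. A chosen node plays a myopic best response among three options: create a link with a non-neighbor (the link forms only if the other node's utility does not decrease, which the proposer anticipates); delete a link with a neighbor (unilaterally); or keep the status quo. It alters a link only if this strictly increases its current utility. - This continues until the network is pairwise stable; then the next node considers entering, and so on. "The resulting topology is X" means: for every number $n$ of nodes, every pairwise stable network reached after the $n$-th node has entered is a network of topology X on $n$ nodes, irrespective of the random choices. *)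

theory Defs
  imports Complex_Main
begin

text \<open>Networks on the node set {..<n} (nodes 0,...,n-1; the k-th entering node is k-1).
  A network is a set of ordered pairs, kept symmetric and irreflexive.\<close>

type_synonym graph = "(nat \<times> nat) set"

definition link :: "nat \<Rightarrow> nat \<Rightarrow> graph" where
  "link i j = {(i, j), (j, i)}"

definition degree :: "nat \<Rightarrow> graph \<Rightarrow> nat \<Rightarrow> nat" where
  "degree n g j = card {w \<in> {..<n}. (j, w) \<in> g}"

definition is_vpath :: "graph \<Rightarrow> nat list \<Rightarrow> nat \<Rightarrow> nat \<Rightarrow> bool" where
  "is_vpath g xs y z \<longleftrightarrow> xs \<noteq> [] \<and> hd xs = y \<and> last xs = z \<and> distinct xs \<and>
     (\<forall>k. Suc k < length xs \<longrightarrow> (xs ! k, xs ! Suc k) \<in> g)"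

definition joined :: "graph \<Rightarrow> nat \<Rightarrow> nat \<Rightarrow> bool" where
  "joined g y z \<longleftrightarrow> (\<exists>xs. is_vpath g xs y z)"

definition gdist :: "graph \<Rightarrow> nat \<Rightarrow> nat \<Rightarrow> nat" where
  "gdist g y z = (LEAST k. \<exists>xs. is_vpath g xs y z \<and> length xs = Suc k)"

definition essential :: "graph \<Rightarrow> nat \<Rightarrow> nat \<Rightarrow> nat \<Rightarrow> bool" where
  "essential g x y z \<longleftrightarrow> x \<noteq> y \<and> x \<noteq> z \<and> (\<forall>xs. is_vpath g xs y z \<longrightarrow> x \<in> set xs)"

definition ess_set :: "nat \<Rightarrow> graph \<Rightarrow> nat \<Rightarrow> nat \<Rightarrow> nat set" where
  "ess_set n g y z = {x \<in> {..<n}. essential g x y z}"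

text \<open>Utility of node j in network g on nodes {..<n}, without the entry term.
  b i is the benefit at distance i (b 0 unused). Pairs {y,z} in the
  intermediation term are unordered (y < z).\<close>
definition utility :: "(nat \<Rightarrow> real) \<Rightarrow> real \<Rightarrow> real \<Rightarrow> nat \<Rightarrow> graph \<Rightarrow> nat \<Rightarrow> real" where
  "utility b c \<gamma> n g j =
     real (degree n g j) * (b 1 - c)
     + (\<Sum>w\<in>{w \<in> {..<n}. joined g j w \<and> gdist g j w > 1}. b (gdist g j w))
     - (\<Sum>w\<in>{w \<in> {..<n}. joined g j w \<and> ess_set n g j w \<noteq> {}}. \<gamma> * b (gdist g j w))
     + (\<Sum>p\<in>{(y, z). y < z \<and> z < n \<and> joined g y z \<and> j \<in> ess_set n g y z}.
          \<gamma> / real (card (ess_set n g (fst p) (snd p))) * 2 * b (gdist g (fst p) (snd p)))"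

definition entry_utility ::
  "(nat \<Rightarrow> real) \<Rightarrow> real \<Rightarrow> real \<Rightarrow> real \<Rightarrow> nat \<Rightarrow> graph \<Rightarrow> nat \<Rightarrow> real" where
  "entry_utility b c \<gamma> c0 n g T =
     - c0 * real (degree n g T) + utility b c \<gamma> (Suc n) (g \<union> link n T) n"

definition pairwise_stable :: "(nat \<Rightarrow> real) \<Rightarrow> real \<Rightarrow> real \<Rightarrow> nat \<Rightarrow> graph \<Rightarrow> bool" where
  "pairwise_stable b c \<gamma> n g \<longleftrightarrow>
     (\<forall>(i, j) \<in> g.
        utility b c \<gamma> n (g - link i j) i \<le> utility b c \<gamma> n g i \<and>
        utility b c \<gamma> n (g - link i j) j \<le> utility b c \<gamma> n g j) \<and>
     (\<forall>i<n. \<forall>j<n. i \<noteq> j \<and> (i, j) \<notin> g \<longrightarrow>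
        utility b c \<gamma> n (g \<union> link i j) i > utility b c \<gamma> n g i \<longrightarrow>
        utility b c \<gamma> n (g \<union> link i j) j < utility b c \<gamma> n g j)"

definition options :: "(nat \<Rightarrow> real) \<Rightarrow> real \<Rightarrow> real \<Rightarrow> nat \<Rightarrow> graph \<Rightarrow> nat \<Rightarrow> graph set" where
  "options b c \<gamma> n g i =
     {g} \<union> {g - link i j | j. (i, j) \<in> g} \<union>
     {g \<union> link i j | j. j < n \<and> j \<noteq> i \<and> (i, j) \<notin> g \<and>
        utility b c \<gamma> n (g \<union> link i j) j \<ge> utility b c \<gamma> n g j}"

definition br_move :: "(nat \<Rightarrow> real) \<Rightarrow> real \<Rightarrow> real \<Rightarrow> nat \<Rightarrow> graph \<Rightarrow> graph \<Rightarrow> bool" where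
  "br_move b c \<gamma> n g g' \<longleftrightarrow> (\<exists>i<n. g' \<in> options b c \<gamma> n g i \<and>
      utility b c \<gamma> n g' i > utility b c \<gamma> n g i \<and>
      (\<forall>h \<in> options b c \<gamma> n g i. utility b c \<gamma> n h i \<le> utility b c \<gamma> n g' i))"

definition accepts :: "(nat \<Rightarrow> real) \<Rightarrow> real \<Rightarrow> real \<Rightarrow> nat \<Rightarrow> graph \<Rightarrow> nat \<Rightarrow> bool" where
  "accepts b c \<gamma> n g T \<longleftrightarrow> T < n \<and>
     utility b c \<gamma> (Suc n) (g \<union> link n T) T \<ge> utility b c \<gamma> n g T"

text \<open>The newcomer n enters by linking to T: T accepts, this is a best choice among the
  accepting targets, and it is strictly better than staying out (utility 0).\<close>
definition entry_choice ::
  "(nat \<Rightarrow> real) \<Rightarrow> real \<Rightarrow> real \<Rightarrow> real \<Rightarrow> nat \<Rightarrow> graph \<Rightarrow> nat \<Rightarrow> bool" where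
  "entry_choice b c \<gamma> c0 n g T \<longleftrightarrow> accepts b c \<gamma> n g T \<and>
     entry_utility b c \<gamma> c0 n g T > 0 \<and>
     (\<forall>T'. accepts b c \<gamma> n g T' \<longrightarrow> entry_utility b c \<gamma> c0 n g T' \<le> entry_utility b c \<gamma> c0 n g T)"

inductive reach :: "(nat \<Rightarrow> real) \<Rightarrow> real \<Rightarrow> real \<Rightarrow> real \<Rightarrow> nat \<Rightarrow> graph \<Rightarrow> bool"
  for b c \<gamma> c0 where
  start: "reach b c \<gamma> c0 1 {}"
| enter: "reach b c \<gamma> c0 n g \<Longrightarrow> pairwise_stable b c \<gamma> n g \<Longrightarrow> entry_choice b c \<gamma> c0 n g T
          \<Longrightarrow> reach b c \<gamma> c0 (Suc n) (g \<union> link n T)"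
| move: "reach b c \<gamma> c0 n g \<Longrightarrow> \<not> pairwise_stable b c \<gamma> n g \<Longrightarrow> br_move b c \<gamma> n g g'
          \<Longrightarrow> reach b c \<gamma> c0 n g'"

definition path_graph :: "nat \<Rightarrow> graph \<Rightarrow> bool" where
  "path_graph n g \<longleftrightarrow> (\<exists>f. bij_betw f {..<n} {..<n} \<and>
     g = (\<Union>i\<in>{i. Suc i < n}. link (f i) (f (Suc i))))"

definition two_star :: "nat \<Rightarrow> graph \<Rightarrow> bool" where
  "two_star n g \<longleftrightarrow> 4 \<le> n \<and> (\<exists>a b La Lb. a < n \<and> b < n \<and> a \<noteq> b \<and>
     La \<inter> Lb = {} \<and> La \<union> Lb = {..<n} - {a, b} \<and> La \<noteq> {} \<and> Lb \<noteq> {} \<and>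
     card La \<le> card Lb + 1 \<and> card Lb \<le> card La + 1 \<and>
     g = link a b \<union> (\<Union>x\<in>La. link a x) \<union> (\<Union>x\<in>Lb. link b x))"

end

theory Submission
  imports Defs
begin

(* With gamma = 0 the utility of node j is d_j (b_1 - c) + \<Sum> b_(l(j,w)) over the nodes w at
   distance at least 2, so only degrees and distances matter.  The theorem follows from an
   invariant of the recursive formation process: every reachable network is the single node or
   a balanced double star, i.e. adjacent centres a, a' with leaf sets A, A' partitioning the
   other nodes and ||A| - |A'|| \<le> 1.  Empty leaf sets are allowed, so the paths on 2 and 3
   nodes are balanced double stars.

   Section 4 shows that every double
   star is pairwise stable: all links are bridges, and a new link changes the proposer's utility
   by b_1 - c - b_2 < 0 or b_1 - c - b_3 \<le> 0 (or hurts the partner); hence no best-response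
   move ever happens.  Section 5 shows that, as b_2 - b_3 < c_0 < b_2 - b_4, a newcomer links to
   a centre with fewest leaves, or to a leaf of the 3-node path. *)

section \<open>Paths, distances and distance labellings\<close>

lemma mem_link: "(u, v) \<in> link i j \<longleftrightarrow> (u = i \<and> v = j) \<or> (u = j \<and> v = i)"
  by (auto simp: link_def)

lemma link_sym: "link i j = link j i"
  by (auto simp: link_def)

lemma vpath_mono: "h \<subseteq> g \<Longrightarrow> is_vpath h xs y z \<Longrightarrow> is_vpath g xs y z"
  unfolding is_vpath_def by blast

lemma gdist_path: "joined g y z \<Longrightarrow> \<exists>xs. is_vpath g xs y z \<and> length xs = Suc (gdist g y z)"
  unfolding joined_def gdist_def
  by (rule LeastI_ex) (metis Suc_pred is_vpath_def length_greater_0_conv)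

lemma gdist_le: "is_vpath g xs y z \<Longrightarrow> length xs = Suc k \<Longrightarrow> gdist g y z \<le> k"
  unfolding gdist_def by (rule Least_le) blast

lemma gdist_le_one_iff:
  assumes "joined g y z"
  shows "gdist g y z \<le> 1 \<longleftrightarrow> z = y \<or> ((y, z) \<in> g \<and> y \<noteq> z)"
proof
  assume le: "gdist g y z \<le> 1"
  obtain xs where xs: "is_vpath g xs y z" "length xs = Suc (gdist g y z)"
    using gdist_path[OF assms] by blast
  show "z = y \<or> ((y, z) \<in> g \<and> y \<noteq> z)"
  proof (cases "gdist g y z")
    case 0
    then obtain u where "xs = [u]" using xs(2) by (cases xs) auto
    then show ?thesis using xs(1) unfolding is_vpath_def by simp
  next
    case (Suc k)
    then obtain u v where "xs = [u, v]" using xs(2) le by (cases xs; cases "tl xs") auto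
    then show ?thesis using xs(1) unfolding is_vpath_def by (auto dest: spec[of _ 0])
  qed
next
  assume "z = y \<or> ((y, z) \<in> g \<and> y \<noteq> z)"
  then show "gdist g y z \<le> 1"
  proof
    assume "z = y"
    then show ?thesis using gdist_le[of g "[y]" y z 0] unfolding is_vpath_def by simp
  next
    assume "(y, z) \<in> g \<and> y \<noteq> z"
    then have "is_vpath g [y, z] y z" unfolding is_vpath_def by (auto simp: less_Suc_eq)
    then show ?thesis using gdist_le[of g "[y, z]" y z 1] by simp
  qed
qed

lemma closed_not_joined:
  assumes closed: "\<forall>(u, v)\<in>h. u \<in> S \<longrightarrow> v \<in> S" and "y \<in> S" "z \<notin> S"
  shows "\<not> joined h y z"
proof
  assume "joined h y z"
  then obtain xs where xs: "is_vpath h xs y z" unfolding joined_def by blast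
  have inS: "xs ! k \<in> S" if "k < length xs" for k
    using that
  proof (induction k)
    case 0
    then show ?case using xs assms(2) unfolding is_vpath_def by (simp add: hd_conv_nth[symmetric])
  next
    case (Suc k)
    then have "(xs ! k, xs ! Suc k) \<in> h" using xs unfolding is_vpath_def by blast
    then show ?case using Suc closed by auto
  qed
  have "xs \<noteq> []" and "z = xs ! (length xs - 1)"
    using xs unfolding is_vpath_def by (auto simp: last_conv_nth)
  then show False using inS assms(3) by simp
qed

text \<open>It is a breadth-first search tree, and \<delta> is then exactly the distance from r.\<close>
definition dist_labelling ::
  "graph \<Rightarrow> nat \<Rightarrow> nat \<Rightarrow> (nat \<Rightarrow> nat) \<Rightarrow> (nat \<Rightarrow> nat) \<Rightarrow> bool" where
  "dist_labelling g r N \<delta> par \<longleftrightarrow> r < N \<and> \<delta> r = 0 \<and> (\<forall>(u, v)\<in>g. \<delta> v \<le> Suc (\<delta> u)) \<and>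
     (\<forall>w<N. w \<noteq> r \<longrightarrow> par w < N \<and> (par w, w) \<in> g \<and> Suc (\<delta> (par w)) = \<delta> w)"

lemma labelling_along_path:
  assumes "dist_labelling g r N \<delta> par" "is_vpath g xs r w" "k < length xs"
  shows "\<delta> (xs ! k) \<le> k"
  using assms(3)
proof (induction k)
  case 0
  then show ?case using assms unfolding is_vpath_def dist_labelling_def
    by (simp add: hd_conv_nth[symmetric])
next
  case (Suc k)
  then have "(xs ! k, xs ! Suc k) \<in> g" using assms(2) unfolding is_vpath_def by blast
  then have "\<delta> (xs ! Suc k) \<le> Suc (\<delta> (xs ! k))" using assms(1) unfolding dist_labelling_def by blast
  then show ?case using Suc by simp
qed

lemma labelling_path:
  assumes lab: "dist_labelling g r N \<delta> par" and "w < N"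
  shows "\<exists>xs. is_vpath g xs r w \<and> length xs = Suc (\<delta> w)"
  using assms(2)
proof (induction "\<delta> w" arbitrary: w rule: less_induct)
  case less
  show ?case
  proof (cases "w = r")
    case True
    then have "is_vpath g [r] r w" unfolding is_vpath_def by simp
    then show ?thesis using True lab unfolding dist_labelling_def by auto
  next
    case False
    define u where "u = par w"
    have u: "u < N" "(u, w) \<in> g" "Suc (\<delta> u) = \<delta> w"
      using lab less(2) False unfolding dist_labelling_def u_def by auto
    then obtain xs where xs: "is_vpath g xs r u" "length xs = Suc (\<delta> u)" using less by force
    have w_new: "w \<notin> set xs"
    proof
      assume "w \<in> set xs"
      then obtain k where "k < length xs" "xs ! k = w" by (auto simp: in_set_conv_nth)
      then show False using labelling_along_path[OF lab xs(1)] xs(2) u(3) by force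
    qed
    have ne: "xs \<noteq> []" and last_u: "last xs = u" using xs unfolding is_vpath_def by auto
    have "is_vpath g (xs @ [w]) r w"
      unfolding is_vpath_def
    proof (intro conjI allI impI)
      show "hd (xs @ [w]) = r" using xs(1) ne unfolding is_vpath_def by simp
      show "distinct (xs @ [w])" using xs(1) w_new unfolding is_vpath_def by simp
      fix k assume k: "Suc k < length (xs @ [w])"
      show "((xs @ [w]) ! k, (xs @ [w]) ! Suc k) \<in> g"
      proof (cases "Suc k < length xs")
        case True
        then show ?thesis using xs(1) unfolding is_vpath_def by (simp add: nth_append)
      next
        case False
        then have "k = length xs - 1" using k by simp
        then have "(xs @ [w]) ! k = u" "(xs @ [w]) ! Suc k = w"
          using ne last_u by (auto simp: nth_append last_conv_nth)
        then show ?thesis using u(2) by simp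
      qed
    qed auto
    then show ?thesis using xs(2) u(3) by (intro exI[of _ "xs @ [w]"]) simp
  qed
qed

lemma labelling_gdist:
  assumes lab: "dist_labelling g r N \<delta> par" and "w < N"
  shows "joined g r w \<and> gdist g r w = \<delta> w"
proof -
  obtain xs where xs: "is_vpath g xs r w" "length xs = Suc (\<delta> w)"
    using labelling_path[OF assms] by blast
  have "gdist g r w = \<delta> w"
    unfolding gdist_def
  proof (rule Least_equality)
    show "\<exists>xs. is_vpath g xs r w \<and> length xs = Suc (\<delta> w)" using xs by blast
    fix k assume "\<exists>xs. is_vpath g xs r w \<and> length xs = Suc k"
    then obtain ys where ys: "is_vpath g ys r w" "length ys = Suc k" by blast
    then have "w = ys ! k" unfolding is_vpath_def by (auto simp: last_conv_nth)
    then show "\<delta> w \<le> k" using labelling_along_path[OF lab ys(1)] ys(2) by simp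
  qed
  then show ?thesis using xs unfolding joined_def by blast
qed

definition on_nodes :: "nat \<Rightarrow> graph \<Rightarrow> bool" where
  "on_nodes n g \<longleftrightarrow> (\<forall>(u, v)\<in>g. u < n \<and> v < n)"

lemma labelling_newcomer_at_root:
  assumes lab: "dist_labelling g T n \<delta> par" and on: "on_nodes n g"
  shows "dist_labelling (g \<union> link n T) T (Suc n) (\<delta>(n := 1)) (par(n := T))"
  using assms unfolding dist_labelling_def on_nodes_def
  by (fastforce simp: mem_link less_Suc_eq)

lemma labelling_from_newcomer:
  assumes lab: "dist_labelling g T n \<delta> par" and on: "on_nodes n g"
  shows "dist_labelling (g \<union> link n T) n (Suc n)
           (\<lambda>w. if w = n then 0 else Suc (\<delta> w)) (\<lambda>w. if w = T then n else par w)"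
  using assms unfolding dist_labelling_def on_nodes_def
  by (fastforce simp: mem_link less_Suc_eq)

section \<open>Utility without intermediation\<close>

text \<open>The benefit from a node at distance k beyond the direct links (which are counted by the
  degree term).\<close>
definition far_benefit :: "(nat \<Rightarrow> real) \<Rightarrow> nat \<Rightarrow> real" where
  "far_benefit b k = (if 1 < k then b k else 0)"

lemma utility_no_intermediation:
  "utility b c 0 N g j = real (degree N g j) * (b 1 - c) +
     (\<Sum>w\<in>{w \<in> {..<N}. joined g j w \<and> 1 < gdist g j w}. b (gdist g j w))"
  by (simp add: utility_def)

lemma utility_by_labelling:
  assumes lab: "dist_labelling g j N \<delta> par"
  shows "utility b c 0 N g j = real (degree N g j) * (b 1 - c) + (\<Sum>w<N. far_benefit b (\<delta> w))"
proof -
  have far: "{w \<in> {..<N}. joined g j w \<and> 1 < gdist g j w} = {w \<in> {..<N}. 1 < \<delta> w}"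
    using labelling_gdist[OF lab] by auto
  have "(\<Sum>w\<in>{w \<in> {..<N}. 1 < \<delta> w}. b (gdist g j w)) =
        (\<Sum>w\<in>{w \<in> {..<N}. 1 < \<delta> w}. b (\<delta> w))"
    using labelling_gdist[OF lab] by (intro sum.cong) auto
  also have "\<dots> = (\<Sum>w<N. far_benefit b (\<delta> w))"
    unfolding far_benefit_def by (rule sum.inter_filter) simp
  finally show ?thesis unfolding utility_no_intermediation far by simp
qed

lemma benefit_antimono:
  assumes b_dec: "\<And>i. 1 \<le> i \<Longrightarrow> b (Suc i) < (b i :: real)"
  shows "1 \<le> i \<Longrightarrow> i \<le> j \<Longrightarrow> b j \<le> b i"
proof (induction j)
  case (Suc j)
  then show ?case using b_dec[of j] by (cases "i = Suc j") force+
qed simp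

text \<open>Deleting a link (i, j) that disconnects j from i strictly hurts i: i loses b_1 - c > 0
  on its degree, and no other node gets closer to i in the smaller network.\<close>
lemma utility_delete_cut_link:
  assumes b_pos: "\<And>i. 1 \<le> i \<Longrightarrow> 0 < b i"
    and b_dec: "\<And>i. 1 \<le> i \<Longrightarrow> b (Suc i) < b i"
    and c_hi: "c < b 1"
    and ij: "(i, j) \<in> g" "j < N" "i \<noteq> j"
    and cut: "\<not> joined (g - link i j) i j"
  shows "utility b c 0 N (g - link i j) i < utility b c 0 N g i"
proof -
  define h where "h = g - link i j"
  have hg: "h \<subseteq> g" unfolding h_def by auto
  define Fh where "Fh = {w \<in> {..<N}. joined h i w \<and> 1 < gdist h i w}"
  define Fg where "Fg = {w \<in> {..<N}. joined g i w \<and> 1 < gdist g i w}"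
  have far_in_g: "w \<in> Fg \<and> b (gdist h i w) \<le> b (gdist g i w)" if w: "w \<in> Fh" for w
  proof -
    from w have jh: "joined h i w" and far_h: "1 < gdist h i w" and wN: "w < N"
      unfolding Fh_def by auto
    obtain xs where xs: "is_vpath h xs i w" "length xs = Suc (gdist h i w)"
      using gdist_path[OF jh] by blast
    have jg: "joined g i w" using vpath_mono[OF hg xs(1)] unfolding joined_def by blast
    have closer: "gdist g i w \<le> gdist h i w" using gdist_le[OF vpath_mono[OF hg xs(1)] xs(2)] .
    have "w \<noteq> j" using jh cut unfolding h_def by blast
    then have "\<not> (w = i \<or> ((i, w) \<in> g \<and> i \<noteq> w))"
      using far_h gdist_le_one_iff[OF jh] unfolding h_def by (auto simp: mem_link)
    then have "\<not> gdist g i w \<le> 1" using gdist_le_one_iff[OF jg] by blast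
    then have "1 < gdist g i w" by simp
    then show ?thesis using jg wN benefit_antimono[of b, OF b_dec] closer unfolding Fg_def by simp
  qed
  have "(\<Sum>w\<in>Fh. b (gdist h i w)) \<le> (\<Sum>w\<in>Fh. b (gdist g i w))"
    using far_in_g by (intro sum_mono) blast
  also have "\<dots> \<le> (\<Sum>w\<in>Fg. b (gdist g i w))"
    using far_in_g by (intro sum_mono2) (auto simp: Fg_def intro!: less_imp_le[OF b_pos])
  finally have sums: "(\<Sum>w\<in>Fh. b (gdist h i w)) \<le> (\<Sum>w\<in>Fg. b (gdist g i w))" .
  have "{w \<in> {..<N}. (i, w) \<in> h} \<subset> {w \<in> {..<N}. (i, w) \<in> g}"
    using ij unfolding h_def by (auto simp: mem_link)
  then have "degree N h i < degree N g i" unfolding degree_def by (simp add: psubset_card_mono)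
  then have "real (degree N h i) * (b 1 - c) < real (degree N g i) * (b 1 - c)"
    using c_hi by (intro mult_strict_right_mono) auto
  then show ?thesis using sums unfolding utility_no_intermediation h_def[symmetric]
    Fh_def[symmetric] Fg_def[symmetric] by linarith
qed

lemma utility_add_link:
  assumes lab: "dist_labelling g i N \<delta> par"
    and lab': "dist_labelling (g \<union> link i z) i N (\<delta>(z := 1)) par'"
    and z: "z < N" "z \<noteq> i" "(i, z) \<notin> g"
  shows "utility b c 0 N (g \<union> link i z) i = utility b c 0 N g i + (b 1 - c) - far_benefit b (\<delta> z)"
proof -
  have "{w \<in> {..<N}. (i, w) \<in> g \<union> link i z} = insert z {w \<in> {..<N}. (i, w) \<in> g}"
    using z by (auto simp: mem_link)
  then have deg: "degree N (g \<union> link i z) i = Suc (degree N g i)"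
    unfolding degree_def using z by simp
  have zN: "z \<in> {..<N}" using z by simp
  have "(\<Sum>w<N. far_benefit b ((\<delta>(z := 1)) w)) = (\<Sum>w\<in>{..<N} - {z}. far_benefit b (\<delta> w))"
    using sum.remove[OF _ zN, of "\<lambda>w. far_benefit b ((\<delta>(z := 1)) w)"]
    by (simp add: far_benefit_def)
  also have "\<dots> = (\<Sum>w<N. far_benefit b (\<delta> w)) - far_benefit b (\<delta> z)"
    using sum.remove[OF _ zN, of "\<lambda>w. far_benefit b (\<delta> w)"] by simp
  finally show ?thesis
    using utility_by_labelling[OF lab, where b=b and c=c]
      utility_by_labelling[OF lab', where b=b and c=c] deg
    by (simp add: algebra_simps)
qed

lemma utility_accept_newcomer:
  assumes lab: "dist_labelling g T n \<delta> par" and on: "on_nodes n g"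
  shows "utility b c 0 (Suc n) (g \<union> link n T) T = utility b c 0 n g T + (b 1 - c)"
proof -
  have Tn: "T < n" using lab unfolding dist_labelling_def by simp
  have "{w \<in> {..<Suc n}. (T, w) \<in> g \<union> link n T} = insert n {w \<in> {..<n}. (T, w) \<in> g}"
    using Tn on unfolding on_nodes_def by (auto simp: mem_link)
  then have deg: "degree (Suc n) (g \<union> link n T) T = Suc (degree n g T)"
    unfolding degree_def by simp
  have "(\<Sum>w<Suc n. far_benefit b ((\<delta>(n := 1)) w)) = (\<Sum>w<n. far_benefit b (\<delta> w))"
    by (auto simp: far_benefit_def intro!: sum.cong)
  then show ?thesis
    using utility_by_labelling[OF lab, where b=b and c=c]
      utility_by_labelling[OF labelling_newcomer_at_root[OF lab on], where b=b and c=c] deg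
    by (simp add: algebra_simps)
qed

lemma entry_utility_by_labelling:
  assumes lab: "dist_labelling g T n \<delta> par" and on: "on_nodes n g"
  shows "entry_utility b c 0 c0 n g T =
           - c0 * real (degree n g T) + (b 1 - c) + (\<Sum>w<n. far_benefit b (Suc (\<delta> w)))"
proof -
  have Tn: "T < n" using lab unfolding dist_labelling_def by simp
  have "{w \<in> {..<Suc n}. (n, w) \<in> g \<union> link n T} = {T}"
    using Tn on unfolding on_nodes_def by (auto simp: mem_link)
  then have deg: "degree (Suc n) (g \<union> link n T) n = 1"
    unfolding degree_def by simp
  have "(\<Sum>w<Suc n. far_benefit b (if w = n then 0 else Suc (\<delta> w))) =
        (\<Sum>w<n. far_benefit b (Suc (\<delta> w)))"
    by (auto simp: far_benefit_def intro!: sum.cong)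
  then show ?thesis
    using utility_by_labelling[OF labelling_from_newcomer[OF lab on], where b=b and c=c] deg
    unfolding entry_utility_def by (simp add: algebra_simps)
qed

section \<open>Double stars\<close>

definition double_star :: "nat \<Rightarrow> nat \<Rightarrow> nat set \<Rightarrow> nat set \<Rightarrow> graph" where
  "double_star a a' A A' = link a a' \<union> (\<Union>x\<in>A. link a x) \<union> (\<Union>x\<in>A'. link a' x)"

definition star_layout :: "nat \<Rightarrow> nat \<Rightarrow> nat \<Rightarrow> nat set \<Rightarrow> nat set \<Rightarrow> bool" where
  "star_layout n a a' A A' \<longleftrightarrow> a < n \<and> a' < n \<and> a \<noteq> a' \<and> A \<inter> A' = {} \<and> A \<union> A' = {..<n} - {a, a'}"

lemma mem_double_star: "(u, v) \<in> double_star a a' A A' \<longleftrightarrow>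
  (u = a \<and> v = a') \<or> (u = a' \<and> v = a) \<or> (u = a \<and> v \<in> A) \<or> (v = a \<and> u \<in> A) \<or>
  (u = a' \<and> v \<in> A') \<or> (v = a' \<and> u \<in> A')"
  by (auto simp: double_star_def link_def)

lemma double_star_swap: "double_star a a' A A' = double_star a' a A' A"
  by (auto simp: double_star_def link_def)

lemma star_layout_swap: "star_layout n a a' A A' \<Longrightarrow> star_layout n a' a A' A"
  by (auto simp: star_layout_def)

lemma star_layout_facts:
  assumes "star_layout n a a' A A'"
  shows "a < n" "a' < n" "a \<noteq> a'" "a \<notin> A" "a' \<notin> A" "a \<notin> A'" "a' \<notin> A'"
    "\<And>x. x \<in> A \<Longrightarrow> x \<notin> A'" "\<And>x. x \<in> A \<Longrightarrow> x < n" "\<And>x. x \<in> A' \<Longrightarrow> x < n"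
    "\<And>w. w < n \<Longrightarrow> w = a \<or> w = a' \<or> w \<in> A \<or> w \<in> A'"
    "finite A" "finite A'"
  using assms unfolding star_layout_def
  by (auto intro: finite_subset[of _ "{..<n}"])

lemma double_star_on_nodes: "star_layout n a a' A A' \<Longrightarrow> on_nodes n (double_star a a' A A')"
  using star_layout_facts[of n a a' A A'] unfolding on_nodes_def by (auto simp: mem_double_star)

lemma sum_over_layout:
  assumes "star_layout n a a' A A'"
  shows "(\<Sum>w<n. f w) = f a + f a' + sum f A + sum f A'"
proof -
  note lay = star_layout_facts[OF assms]
  have "{..<n} = insert a (insert a' (A \<union> A'))" using assms unfolding star_layout_def by auto
  moreover have "A \<inter> A' = {}" using assms unfolding star_layout_def by auto
  ultimately show ?thesis using lay(3-7,12,13) by (simp add: sum.union_disjoint add.assoc)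
qed

lemma star_layout_card: "star_layout n a a' A A' \<Longrightarrow> n = card A + card A' + 2"
  using sum_over_layout[of n a a' A A' "\<lambda>_. 1::nat"] by simp

lemma degree_centre:
  assumes "star_layout n a a' A A'"
  shows "degree n (double_star a a' A A') a = Suc (card A)"
proof -
  note lay = star_layout_facts[OF assms]
  have "{w \<in> {..<n}. (a, w) \<in> double_star a a' A A'} = insert a' A"
    using lay by (auto simp: mem_double_star)
  then show ?thesis unfolding degree_def using lay by simp
qed

lemma degree_leaf:
  assumes "star_layout n a a' A A'" "x \<in> A"
  shows "degree n (double_star a a' A A') x = 1"
proof -
  note lay = star_layout_facts[OF assms(1)]
  have "{w \<in> {..<n}. (x, w) \<in> double_star a a' A A'} = {a}"
    using lay assms(2) by (auto simp: mem_double_star)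
  then show ?thesis unfolding degree_def by simp
qed

definition centre_dist :: "nat \<Rightarrow> nat \<Rightarrow> nat set \<Rightarrow> nat \<Rightarrow> nat" where
  "centre_dist a a' A w = (if w = a then 0 else if w = a' \<or> w \<in> A then 1 else 2)"

definition centre_parent :: "nat \<Rightarrow> nat \<Rightarrow> nat set \<Rightarrow> nat \<Rightarrow> nat" where
  "centre_parent a a' A' w = (if w \<in> A' then a' else a)"

definition leaf_dist :: "nat \<Rightarrow> nat \<Rightarrow> nat set \<Rightarrow> nat \<Rightarrow> nat" where
  "leaf_dist x a A' w = (if w = x then 0 else if w = a then 1 else if w \<in> A' then 3 else 2)"

definition leaf_parent :: "nat \<Rightarrow> nat \<Rightarrow> nat \<Rightarrow> nat set \<Rightarrow> nat \<Rightarrow> nat" where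
  "leaf_parent x a a' A' w = (if w = a then x else if w \<in> A' then a' else a)"

lemma labelling_centre:
  assumes "star_layout n a a' A A'"
  shows "dist_labelling (double_star a a' A A') a n (centre_dist a a' A) (centre_parent a a' A')"
  using star_layout_facts[OF assms] unfolding dist_labelling_def centre_dist_def centre_parent_def
  by (auto simp: mem_double_star)

lemma labelling_leaf:
  assumes "star_layout n a a' A A'" "x \<in> A"
  shows "dist_labelling (double_star a a' A A') x n (leaf_dist x a A') (leaf_parent x a a' A')"
  using star_layout_facts[OF assms(1)] assms(2) unfolding dist_labelling_def leaf_dist_def leaf_parent_def
  by (auto simp: mem_double_star)

lemma double_star_labelling:
  assumes lay: "star_layout n a a' A A'" and "T < n"
  shows "\<exists>\<delta> par. dist_labelling (double_star a a' A A') T n \<delta> par"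
proof -
  have "T = a \<or> T = a' \<or> T \<in> A \<or> T \<in> A'" using star_layout_facts(11)[OF lay] assms(2) by blast
  then show ?thesis
    using labelling_centre[OF lay] labelling_centre[OF star_layout_swap[OF lay]]
      labelling_leaf[OF lay] labelling_leaf[OF star_layout_swap[OF lay]]
    by (auto simp: double_star_swap)
qed

lemma labelling_sibling_link:
  assumes "star_layout n a a' A A'" "x \<in> A" "x' \<in> A" "x \<noteq> x'"
  shows "dist_labelling (double_star a a' A A' \<union> link x x') x n
           ((leaf_dist x a A')(x' := 1)) ((leaf_parent x a a' A')(x' := x))"
  using star_layout_facts[OF assms(1)] assms(2-) unfolding dist_labelling_def leaf_dist_def leaf_parent_def
  by (auto simp: mem_double_star mem_link)

lemma labelling_cross_leaf_link:
  assumes "star_layout n a a' A A'" "x \<in> A" "y \<in> A'"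
  shows "dist_labelling (double_star a a' A A' \<union> link x y) x n
           ((leaf_dist x a A')(y := 1)) ((leaf_parent x a a' A')(y := x))"
  using star_layout_facts[OF assms(1)] assms(2-) unfolding dist_labelling_def leaf_dist_def leaf_parent_def
  by (auto simp: mem_double_star mem_link)

lemma labelling_centre_cross_link:
  assumes "star_layout n a a' A A'" "y \<in> A'"
  shows "dist_labelling (double_star a a' A A' \<union> link a y) a n
           ((centre_dist a a' A)(y := 1)) ((centre_parent a a' A')(y := a))"
  using star_layout_facts[OF assms(1)] assms(2-) unfolding dist_labelling_def centre_dist_def centre_parent_def
  by (auto simp: mem_double_star mem_link)

text \<open>Every link of a double star is a bridge.  It suffices to treat links at the side of a,
  the other side following by symmetry.\<close>
lemma double_star_cut_link_side:
  assumes lay: "star_layout n a a' A A'" and ij: "(i, j) \<in> double_star a a' A A'" "i \<in> insert a A"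
  shows "\<not> joined (double_star a a' A A' - link i j) i j"
proof -
  note lay = star_layout_facts[OF lay]
  consider "i = a" "j = a'" | "i = a" "j \<in> A" | "i \<in> A" "j = a"
    using ij lay by (auto simp: mem_double_star)
  then show ?thesis
  proof cases
    case 1
    then show ?thesis using lay
      by (intro closed_not_joined[where S = "insert a A"]) (auto simp: mem_double_star mem_link)
  next
    case 2
    then show ?thesis using lay
      by (intro closed_not_joined[where S = "- {j}"]) (auto simp: mem_double_star mem_link)
  next
    case 3
    then show ?thesis using lay
      by (intro closed_not_joined[where S = "{i}"]) (auto simp: mem_double_star mem_link)
  qed
qed

lemma double_star_cut_link:
  assumes lay: "star_layout n a a' A A'" and ij: "(i, j) \<in> double_star a a' A A'"
  shows "\<not> joined (double_star a a' A A' - link i j) i j"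
proof -
  have "i < n" using ij double_star_on_nodes[OF lay] unfolding on_nodes_def by auto
  then have "i \<in> insert a A \<or> i \<in> insert a' A'" using star_layout_facts(11)[OF lay] by auto
  then show ?thesis
    using double_star_cut_link_side[OF lay ij] double_star_cut_link_side[OF star_layout_swap[OF lay]] ij
    by (auto simp: double_star_swap)
qed

lemma double_star_add_leaf: "double_star a a' A A' \<union> link n a = double_star a a' (insert n A) A'"
  by (auto simp: double_star_def link_def)

lemma star_layout_add_leaf: "star_layout n a a' A A' \<Longrightarrow> star_layout (Suc n) a a' (insert n A) A'"
  unfolding star_layout_def by auto

definition balanced_double_star :: "nat \<Rightarrow> graph \<Rightarrow> bool" where
  "balanced_double_star n g \<longleftrightarrow> (\<exists>a a' A A'. star_layout n a a' A A' \<and>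
     card A \<le> card A' + 1 \<and> card A' \<le> card A + 1 \<and> g = double_star a a' A A')"

lemma balanced_double_starI:
  "star_layout n a a' A A' \<Longrightarrow> card A \<le> card A' + 1 \<Longrightarrow> card A' \<le> card A + 1 \<Longrightarrow>
     balanced_double_star n (double_star a a' A A')"
  unfolding balanced_double_star_def by (intro exI[where x = a] conjI exI) auto

text \<open>Extending the path a' - a - x at its end x gives the path on 4 nodes, which is the
  double star with centres a and x.\<close>
lemma path3_extend_at_end:
  assumes lay: "star_layout n a a' {x} {}"
  shows "balanced_double_star (Suc n) (double_star a a' {x} {} \<union> link n x)"
proof -
  note facts = star_layout_facts[OF lay]
  have "double_star a a' {x} {} \<union> link n x = double_star a x {a'} {n}"
    by (auto simp: double_star_def link_def)
  moreover have "star_layout (Suc n) a x {a'} {n}"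
  proof -
    have others: "{..<n} - {a, a'} = {x}" using lay unfolding star_layout_def by simp
    have "{..<Suc n} - {a, x} = {a', n}"
    proof (intro equalityI subsetI)
      fix w assume w: "w \<in> {..<Suc n} - {a, x}"
      show "w \<in> {a', n}"
      proof (cases "w = n")
        case False
        then have "w \<in> {..<n}" "w \<noteq> a" "w \<notin> {..<n} - {a, a'}" using w others by auto
        then show ?thesis by simp
      qed simp
    qed (use facts(1-5,9) in auto)
    then show ?thesis using facts(1-5,9) unfolding star_layout_def by auto
  qed
  ultimately show ?thesis using balanced_double_starI by simp
qed

section \<open>Stability of double stars\<close>

locale formation_parameters =
  fixes b :: "nat \<Rightarrow> real" and c c0 :: real
  assumes b_pos: "\<And>i. 1 \<le> i \<Longrightarrow> 0 < b i"
    and b_dec: "\<And>i. 1 \<le> i \<Longrightarrow> b (Suc i) < b i"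
    and c_lo: "b 1 - b 3 \<le> c" and c_hi: "c < b 1"
    and c0_lo: "b 2 - b 3 < c0" and c0_hi: "c0 < b 2 - b 4"
begin

abbreviation U :: "nat \<Rightarrow> graph \<Rightarrow> nat \<Rightarrow> real" where
  "U n g j \<equiv> utility b c 0 n g j"

lemma b3_lt_b2: "b 3 < b 2"
  using b_dec[of 2] by (simp add: numeral_3_eq_3 numeral_2_eq_2)

lemma b4_lt_b3: "b 4 < b 3"
  using b_dec[of 3] by (simp add: numeral_3_eq_3 eval_nat_numeral)

lemma link_value_lt_b2: "b 1 - c < b 2"
  using c_lo b3_lt_b2 by linarith

lemma link_value_le_b3: "b 1 - c \<le> b 3"
  using c_lo by linarith

lemma sibling_link_hurts:
  assumes lay: "star_layout n a a' A A'" and "x \<in> A" "x' \<in> A" "x \<noteq> x'"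
  shows "U n (double_star a a' A A' \<union> link x x') x < U n (double_star a a' A A') x"
proof -
  note facts = star_layout_facts[OF lay]
  have "U n (double_star a a' A A' \<union> link x x') x =
          U n (double_star a a' A A') x + (b 1 - c) - far_benefit b (leaf_dist x a A' x')"
    using assms facts
    by (intro utility_add_link[OF labelling_leaf[OF lay assms(2)] labelling_sibling_link[OF assms]])
       (auto simp: mem_double_star)
  moreover have "far_benefit b (leaf_dist x a A' x') = b 2"
    using assms facts by (auto simp: far_benefit_def leaf_dist_def)
  ultimately show ?thesis using link_value_lt_b2 by linarith
qed

lemma cross_leaf_link_no_gain:
  assumes lay: "star_layout n a a' A A'" and "x \<in> A" "y \<in> A'"
  shows "U n (double_star a a' A A' \<union> link x y) x \<le> U n (double_star a a' A A') x"
proof -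
  note facts = star_layout_facts[OF lay]
  have "U n (double_star a a' A A' \<union> link x y) x =
          U n (double_star a a' A A') x + (b 1 - c) - far_benefit b (leaf_dist x a A' y)"
    using assms facts
    by (intro utility_add_link[OF labelling_leaf[OF lay assms(2)] labelling_cross_leaf_link[OF assms]])
       (auto simp: mem_double_star)
  moreover have "far_benefit b (leaf_dist x a A' y) = b 3"
    using assms facts by (auto simp: far_benefit_def leaf_dist_def)
  ultimately show ?thesis using link_value_le_b3 by linarith
qed

lemma centre_cross_link_hurts:
  assumes lay: "star_layout n a a' A A'" and "y \<in> A'"
  shows "U n (double_star a a' A A' \<union> link a y) a < U n (double_star a a' A A') a"
proof -
  note facts = star_layout_facts[OF lay]
  have "U n (double_star a a' A A' \<union> link a y) a =
          U n (double_star a a' A A') a + (b 1 - c) - far_benefit b (centre_dist a a' A y)"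
    using assms facts
    by (intro utility_add_link[OF labelling_centre[OF lay] labelling_centre_cross_link[OF assms]])
       (auto simp: mem_double_star)
  moreover have "far_benefit b (centre_dist a a' A y) = b 2"
    using assms facts by (auto simp: far_benefit_def centre_dist_def)
  ultimately show ?thesis using link_value_lt_b2 by linarith
qed

text \<open>Deleting any link hurts both of its end nodes, since every link is a bridge.\<close>
lemma double_star_no_deletion:
  assumes lay: "star_layout n a a' A A'" and ij: "(i, j) \<in> double_star a a' A A'"
  shows "U n (double_star a a' A A' - link i j) i < U n (double_star a a' A A') i"
proof -
  have "j < n" using ij double_star_on_nodes[OF lay] unfolding on_nodes_def by auto
  moreover have "i \<noteq> j" using ij star_layout_facts[OF lay] by (auto simp: mem_double_star)
  ultimately show ?thesis
    using utility_delete_cut_link[OF b_pos b_dec c_hi ij] double_star_cut_link[OF lay ij] by blast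
qed

lemma double_star_no_addition_side:
  assumes lay: "star_layout n a a' A A'" and i: "i \<in> insert a A"
    and j: "j < n" "i \<noteq> j" "(i, j) \<notin> double_star a a' A A'"
    and gain: "U n (double_star a a' A A' \<union> link i j) i > U n (double_star a a' A A') i"
  shows "U n (double_star a a' A A' \<union> link i j) j < U n (double_star a a' A A') j"
proof -
  note facts = star_layout_facts[OF lay]
  consider "i = a" "j \<in> A'" | "i \<in> A" "j = a'" | "i \<in> A" "j \<in> A" | "i \<in> A" "j \<in> A'"
    using i j facts by (auto simp: mem_double_star)
  then show ?thesis
  proof cases
    case 1
    then show ?thesis using centre_cross_link_hurts[OF lay] gain by force
  next
    case 2
    then show ?thesis
      using centre_cross_link_hurts[OF star_layout_swap[OF lay], of i] by (simp add: double_star_swap link_sym)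
  next
    case 3
    then show ?thesis using sibling_link_hurts[OF lay _ _ j(2)] gain by force
  next
    case 4
    then show ?thesis using cross_leaf_link_no_gain[OF lay] gain by force
  qed
qed

lemma double_star_stable:
  assumes lay: "star_layout n a a' A A'"
  shows "pairwise_stable b c 0 n (double_star a a' A A')"
  unfolding pairwise_stable_def
proof (intro conjI ballI allI impI)
  fix e assume "e \<in> double_star a a' A A'"
  then obtain i j where ij: "e = (i, j)" "(i, j) \<in> double_star a a' A A'" by (cases e) auto
  then have ji: "(j, i) \<in> double_star a a' A A'" by (auto simp: mem_double_star)
  show "case e of (i, j) \<Rightarrow> U n (double_star a a' A A' - link i j) i \<le> U n (double_star a a' A A') i \<and>
          U n (double_star a a' A A' - link i j) j \<le> U n (double_star a a' A A') j"
    using double_star_no_deletion[OF lay ij(2)] double_star_no_deletion[OF lay ji] ij(1)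
    by (simp add: link_sym less_imp_le)
next
  fix i j assume ij: "i < n" "j < n" "i \<noteq> j \<and> (i, j) \<notin> double_star a a' A A'"
    and gain: "U n (double_star a a' A A' \<union> link i j) i > U n (double_star a a' A A') i"
  have "i \<in> insert a A \<or> i \<in> insert a' A'" using star_layout_facts(11)[OF lay] ij by auto
  then show "U n (double_star a a' A A' \<union> link i j) j < U n (double_star a a' A A') j"
    using double_star_no_addition_side[OF lay _ ij(2)]
      double_star_no_addition_side[OF star_layout_swap[OF lay] _ ij(2)] ij gain
    by (auto simp: double_star_swap)
qed

section \<open>Entry of a newcomer into a double star\<close>

abbreviation EU :: "nat \<Rightarrow> graph \<Rightarrow> nat \<Rightarrow> real" where
  "EU n g T \<equiv> entry_utility b c 0 c0 n g T"

text \<open>Entering at a centre a: distance 2 to a' and to the leaves of a, distance 3 to the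
  leaves of a'; the entry cost is c_0 times the degree |A| + 1 of a.\<close>
lemma entry_utility_centre:
  assumes lay: "star_layout n a a' A A'"
  shows "EU n (double_star a a' A A') a = - c0 * (real (card A) + 1) + (b 1 - c) + b 2
           + real (card A) * b 2 + real (card A') * b 3"
proof -
  note facts = star_layout_facts[OF lay]
  let ?f = "\<lambda>w. far_benefit b (Suc (centre_dist a a' A w))"
  have "sum ?f A = sum (\<lambda>w. b 2) A"
    using facts by (intro sum.cong) (auto simp: far_benefit_def centre_dist_def numeral_2_eq_2)
  moreover have "sum ?f A' = sum (\<lambda>w. b 3) A'"
    using facts by (intro sum.cong) (auto simp: far_benefit_def centre_dist_def numeral_3_eq_3)
  moreover have "?f a = 0" "?f a' = b 2"
    using facts by (simp_all add: far_benefit_def centre_dist_def numeral_2_eq_2)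
  ultimately have "(\<Sum>w<n. ?f w) = b 2 + real (card A) * b 2 + real (card A') * b 3"
    using sum_over_layout[OF lay, of ?f] by simp
  then show ?thesis
    using entry_utility_by_labelling[OF labelling_centre[OF lay] double_star_on_nodes[OF lay]]
      degree_centre[OF lay] by (simp add: algebra_simps)
qed

text \<open>Entering at a leaf x of a: distance 2 to a, distance 3 to a' and to the other leaves of
  a, distance 4 to the leaves of a'; the entry cost is c_0.\<close>
lemma entry_utility_leaf:
  assumes lay: "star_layout n a a' A A'" and x: "x \<in> A"
  shows "EU n (double_star a a' A A') x = - c0 + (b 1 - c) + b 2 + b 3
           + (real (card A) - 1) * b 3 + real (card A') * b 4"
proof -
  note facts = star_layout_facts[OF lay]
  let ?f = "\<lambda>w. far_benefit b (Suc (leaf_dist x a A' w))"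
  have "sum ?f (A - {x}) = sum (\<lambda>w. b 3) (A - {x})"
    using facts by (intro sum.cong) (auto simp: far_benefit_def leaf_dist_def numeral_3_eq_3)
  moreover have "real (card (A - {x})) = real (card A) - 1"
  proof -
    have "0 < card A" using x facts(12) card_gt_0_iff by blast
    then show ?thesis using card_Diff_singleton[OF x] by (simp add: of_nat_diff)
  qed
  moreover have "sum ?f A = ?f x + sum ?f (A - {x})"
    using sum.remove[OF facts(12) x] by simp
  ultimately have leaves_a: "sum ?f A = (real (card A) - 1) * b 3"
    by (simp add: far_benefit_def leaf_dist_def)
  have "sum ?f A' = sum (\<lambda>w. b 4) A'"
    using facts x by (intro sum.cong) (auto simp: far_benefit_def leaf_dist_def eval_nat_numeral)
  moreover have "?f a = b 2" "?f a' = b 3"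
    using facts x by (auto simp: far_benefit_def leaf_dist_def numeral_2_eq_2 numeral_3_eq_3)
  ultimately have "(\<Sum>w<n. ?f w) = b 2 + b 3 + (real (card A) - 1) * b 3 + real (card A') * b 4"
    using sum_over_layout[OF lay, of ?f] leaves_a by simp
  then show ?thesis
    using entry_utility_by_labelling[OF labelling_leaf[OF lay x] double_star_on_nodes[OF lay]]
      degree_leaf[OF lay x] by (simp add: algebra_simps)
qed

text \<open>Every node of a double star accepts a newcomer, gaining b_1 - c > 0.\<close>
lemma accepts_any_target:
  assumes lay: "star_layout n a a' A A'" and "T < n"
  shows "accepts b c 0 n (double_star a a' A A') T"
proof -
  obtain \<delta> par where lab: "dist_labelling (double_star a a' A A') T n \<delta> par"
    using double_star_labelling[OF assms] by blast
  show ?thesis unfolding accepts_def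
    using utility_accept_newcomer[OF lab double_star_on_nodes[OF lay], where b=b and c=c] assms(2) c_hi
    by simp
qed

lemma entry_target_cases:
  assumes lay: "star_layout n a a' A A'" and bal: "card A' \<le> card A" "card A \<le> card A' + 1"
    and choice: "entry_choice b c 0 c0 n (double_star a a' A A') T"
  shows "(T = a \<and> card A = card A') \<or> T = a' \<or> (T \<in> A \<and> A' = {})"
proof -
  note facts = star_layout_facts[OF lay]
  define k where "k = real (card A)"
  define k' where "k' = real (card A')"
  have Tn: "T < n" using choice unfolding entry_choice_def accepts_def by simp
  have best: "EU n (double_star a a' A A') a' \<le> EU n (double_star a a' A A') T"
    using choice accepts_any_target[OF lay facts(2)] unfolding entry_choice_def by blast
  have EU_a': "EU n (double_star a a' A A') a' = - c0 * (k' + 1) + (b 1 - c) + b 2 + k' * b 2 + k * b 3"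
    using entry_utility_centre[OF star_layout_swap[OF lay]] unfolding k_def k'_def
    by (simp add: double_star_swap)
  have "T = a \<or> T = a' \<or> T \<in> A \<or> T \<in> A'" using facts(11) Tn by blast
  txt \<open>At a with one leaf more than a', the newcomer loses c_0 - b_2 + b_3 > 0 against a'.\<close>
  moreover have "card A = card A'" if T: "T = a"
  proof (rule ccontr)
    assume "card A \<noteq> card A'"
    then have "k = k' + 1" using bal unfolding k_def k'_def by simp
    then have "EU n (double_star a a' A A') a' - EU n (double_star a a' A A') a = c0 - b 2 + b 3"
      using EU_a' entry_utility_centre[OF lay] unfolding k_def k'_def by (simp add: algebra_simps)
    then show False using best T c0_lo by simp
  qed
  txt \<open>At a leaf of a, it does |A'| (b_2 - b_4 - c_0) worse than at a', a loss unless A' = {}.\<close>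
  moreover have "A' = {}" if T: "T \<in> A"
  proof (rule ccontr)
    assume "A' \<noteq> {}"
    then have "0 < k'" using facts(13) unfolding k'_def by (simp add: card_gt_0_iff)
    have "EU n (double_star a a' A A') a' - EU n (double_star a a' A A') T = k' * (b 2 - b 4 - c0)"
      using EU_a' entry_utility_leaf[OF lay T] unfolding k_def k'_def by (simp add: algebra_simps)
    moreover have "0 < k' * (b 2 - b 4 - c0)" using \<open>0 < k'\<close> c0_hi by simp
    ultimately show False using best by simp
  qed
  txt \<open>At a leaf of a', it loses at least |A'| (b_2 - b_4 - c_0) > 0 against a'.\<close>
  moreover have "T \<notin> A'"
  proof
    assume T: "T \<in> A'"
    then have "0 < k'" using facts(13) unfolding k'_def by (auto simp: card_gt_0_iff)
    have "EU n (double_star a a' A A') T = - c0 + (b 1 - c) + b 2 + b 3 + (k' - 1) * b 3 + k * b 4"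
      using entry_utility_leaf[OF star_layout_swap[OF lay] T] unfolding k_def k'_def
      by (simp add: double_star_swap)
    then have "EU n (double_star a a' A A') a' - EU n (double_star a a' A A') T
        = k' * (b 2 - b 4 - c0) + (k - k') * (b 3 - b 4)"
      using EU_a' by (simp add: algebra_simps)
    moreover have "0 < k' * (b 2 - b 4 - c0)" using \<open>0 < k'\<close> c0_hi by simp
    moreover have "0 \<le> (k - k') * (b 3 - b 4)" using bal b4_lt_b3 unfolding k_def k'_def by simp
    ultimately show False using best by simp
  qed
  ultimately show ?thesis by blast
qed

section \<open>The invariant of the formation process\<close>

lemma entry_keeps_balance_side:
  assumes lay: "star_layout n a a' A A'" and bal: "card A' \<le> card A" "card A \<le> card A' + 1"
    and choice: "entry_choice b c 0 c0 n (double_star a a' A A') T"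
  shows "balanced_double_star (Suc n) (double_star a a' A A' \<union> link n T)"
proof -
  note facts = star_layout_facts[OF lay]
  have new_a: "n \<notin> A" and new_a': "n \<notin> A'" using facts(9,10) by auto
  consider "T = a" "card A = card A'" | "T = a'" | "T \<in> A" "A' = {}"
    using entry_target_cases[OF lay bal choice] by blast
  then show ?thesis
  proof cases
    case 1
    then show ?thesis
      using balanced_double_starI[OF star_layout_add_leaf[OF lay]] new_a facts(12)
      by (simp add: double_star_add_leaf)
  next
    case 2
    have "double_star a a' A A' \<union> link n T = double_star a a' A (insert n A')"
      using 2 by (auto simp: double_star_def link_def)
    moreover have "star_layout (Suc n) a a' A (insert n A')"
      using star_layout_swap[OF star_layout_add_leaf[OF star_layout_swap[OF lay]]] .
    ultimately show ?thesis using balanced_double_starI bal new_a' facts(13) by simp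
  next
    case 3
    then have "card A = 1" using bal facts(12) by (auto simp: le_Suc_eq)
    then have A: "A = {T}" using 3 by (auto simp: card_Suc_eq)
    then show ?thesis using path3_extend_at_end lay 3 by simp
  qed
qed

lemma entry_keeps_balance:
  assumes "balanced_double_star n g" and choice: "entry_choice b c 0 c0 n g T"
  shows "balanced_double_star (Suc n) (g \<union> link n T)"
proof -
  obtain a a' A A' where lay: "star_layout n a a' A A'" and bal: "card A \<le> card A' + 1"
      "card A' \<le> card A + 1" and g: "g = double_star a a' A A'"
    using assms(1) unfolding balanced_double_star_def by blast
  show ?thesis
  proof (cases "card A' \<le> card A")
    case True
    then show ?thesis using entry_keeps_balance_side[OF lay True bal(1)] choice g by simp
  next
    case False
    then show ?thesis using entry_keeps_balance_side[OF star_layout_swap[OF lay], of T] bal choice g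
      by (simp add: double_star_swap)
  qed
qed

text \<open>Every reachable network is the single node or a balanced double star.  Since all of
  these are pairwise stable, no best-response move is ever made; entries preserve the shape.\<close>
lemma reachable_balanced:
  assumes "reach b c 0 c0 n g"
  shows "(n = 1 \<and> g = {}) \<or> balanced_double_star n g"
  using assms
proof (induction rule: reach.induct)
  case start
  then show ?case by simp
next
  case (enter n g T)
  show ?case
  proof (cases "n = 1 \<and> g = {}")
    case True
    then have "T = 0" using enter.hyps(3) unfolding entry_choice_def accepts_def by simp
    then have "g \<union> link n T = double_star 0 1 {} {}" using True by (auto simp: double_star_def link_def)
    moreover have "star_layout (Suc n) 0 1 {} {}" using True unfolding star_layout_def by auto
    ultimately show ?thesis using balanced_double_starI by simp
  next
    case False
    then show ?thesis using enter.IH entry_keeps_balance[OF _ enter.hyps(3)] by blast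
  qed
next
  case (move n g g')
  have "pairwise_stable b c 0 n g"
    using move.IH
  proof
    assume "n = 1 \<and> g = {}"
    then show ?thesis unfolding pairwise_stable_def by simp
  next
    assume "balanced_double_star n g"
    then show ?thesis using double_star_stable unfolding balanced_double_star_def by blast
  qed
  then show ?case using move.hyps(2) by contradiction
qed

end

section \<open>Shape of balanced double stars\<close>

lemma path_graph_one: "path_graph 1 {}"
  unfolding path_graph_def by (intro exI[of _ id]) auto

lemma path_graph_two:
  assumes "a \<noteq> a'" "{a, a'} = {..<2::nat}"
  shows "path_graph 2 (link a a')"
proof -
  define f where "f = (\<lambda>i::nat. if i = 0 then a else a')"
  have nodes: "{..<2::nat} = {0, 1}" by auto
  have "inj_on f {..<2}" unfolding inj_on_def f_def nodes using assms(1) by auto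
  moreover have "f ` {..<2} = {a, a'}" unfolding f_def nodes by auto
  ultimately have "bij_betw f {..<2} {..<2}" unfolding bij_betw_def using assms(2) by simp
  moreover have "{i. Suc i < 2} = {0::nat}" by auto
  ultimately show ?thesis unfolding path_graph_def by (intro exI[of _ f]) (simp add: f_def)
qed

lemma path_graph_three:
  assumes "a \<noteq> a'" "a \<noteq> x" "a' \<noteq> x" "{a, a', x} = {..<3::nat}"
  shows "path_graph 3 (link a a' \<union> link a x)"
proof -
  define f where "f = (\<lambda>i::nat. if i = 0 then x else if i = 1 then a else a')"
  have nodes: "{..<3::nat} = {0, 1, 2}" by auto
  have "inj_on f {..<3}" unfolding inj_on_def f_def nodes using assms(1-3) by auto
  moreover have "f ` {..<3} = {a, a', x}" unfolding f_def nodes by auto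
  ultimately have "bij_betw f {..<3} {..<3}" unfolding bij_betw_def using assms(4) by simp
  moreover have "{i. Suc i < 3} = {0::nat, 1}" by auto
  moreover have "link a a' \<union> link a x = link x a \<union> link a a'" by (auto simp: link_def)
  ultimately show ?thesis unfolding path_graph_def by (intro exI[of _ f]) (simp add: f_def)
qed

lemma small_double_star_path:
  assumes lay: "star_layout n a a' A A'" and small: "n \<le> 3" and le: "card A' \<le> card A"
  shows "path_graph n (double_star a a' A A')"
proof -
  note facts = star_layout_facts[OF lay]
  have cover: "A \<union> A' = {..<n} - {a, a'}" using lay unfolding star_layout_def by auto
  have n: "n = card A + card A' + 2" using star_layout_card[OF lay] .
  then have "card A' = 0" using small le by simp
  then have "A' = {}" using facts(13) by simp
  show ?thesis
  proof (cases "A = {}")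
    case True
    then have "double_star a a' A A' = link a a'" "n = 2" using \<open>A' = {}\<close> n
      by (auto simp: double_star_def)
    moreover have "{a, a'} = {..<2}" using cover True \<open>A' = {}\<close> facts(1-3) \<open>n = 2\<close> by auto
    ultimately show ?thesis using path_graph_two facts(3) by simp
  next
    case False
    then have "card A \<noteq> 0" using facts(12) by simp
    then have "card A = 1" using n small \<open>A' = {}\<close> by simp
    then obtain x where A: "A = {x}" using card_1_singletonE by blast
    then have "double_star a a' A A' = link a a' \<union> link a x" "n = 3" using \<open>A' = {}\<close> n
      by (auto simp: double_star_def)
    moreover have "{a, a', x} = {..<3}" using cover A \<open>A' = {}\<close> facts(1-3) \<open>n = 3\<close> by auto
    ultimately show ?thesis using path_graph_three facts(3-5) A by simp
  qed
qed

lemma balanced_double_star_shape: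
  assumes "balanced_double_star n g"
  shows "(n \<le> 3 \<longrightarrow> path_graph n g) \<and> (4 \<le> n \<longrightarrow> two_star n g)"
proof -
  obtain a a' A A' where lay: "star_layout n a a' A A'" and bal: "card A \<le> card A' + 1"
      "card A' \<le> card A + 1" and g: "g = double_star a a' A A'"
    using assms unfolding balanced_double_star_def by blast
  have n: "n = card A + card A' + 2" using star_layout_card[OF lay] .
  have "two_star n g" if "4 \<le> n"
  proof -
    have "A \<noteq> {}" "A' \<noteq> {}" using that n bal by auto
    then show ?thesis unfolding two_star_def g double_star_def
      using that lay bal unfolding star_layout_def
      by (intro conjI exI[of _ a] exI[of _ a'] exI[of _ A] exI[of _ A']) simp_all
  qed
  moreover have "path_graph n g" if small: "n \<le> 3"
  proof (cases "card A' \<le> card A")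
    case True
    then show ?thesis using small_double_star_path[OF lay small] g by simp
  next
    case False
    then show ?thesis using small_double_star_path[OF star_layout_swap[OF lay] small] g
      by (simp add: double_star_swap)
  qed
  ultimately show ?thesis by blast
qed

theorem corollary1:
  fixes b :: "nat \<Rightarrow> real" and c c0 :: real and n :: nat and g :: graph
  assumes b_pos: "\<And>i. 1 \<le> i \<Longrightarrow> 0 < b i"
    and b_dec: "\<And>i. 1 \<le> i \<Longrightarrow> b (Suc i) < b i"
    and c_lo: "b 1 - b 3 \<le> c" and c_hi: "c < b 1"
    and c0_lo: "b 2 - b 3 < c0" and c0_hi: "c0 < b 2 - b 4"
    and reached: "reach b c 0 c0 n g"
    and stable: "pairwise_stable b c 0 n g"
  shows "(n \<le> 3 \<longrightarrow> path_graph n g) \<and> (4 \<le> n \<longrightarrow> two_star n g)"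
proof -
  interpret formation_parameters b c c0
    using b_pos b_dec c_lo c_hi c0_lo c0_hi by unfold_locales
  have "(n = 1 \<and> g = {}) \<or> balanced_double_star n g"
    using reachable_balanced[OF reached] .
  then show ?thesis
  proof
    assume "n = 1 \<and> g = {}"
    then show ?thesis using path_graph_one by simp
  next
    assume "balanced_double_star n g"
    then show ?thesis by (rule balanced_double_star_shape)
  qed
qed

end
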